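(* If $G=(V,E)$ is a finite connected bipartite graph and $P$ is a geodesic (shortest) path in $G$, then $P$ is $(1,1)$-guardable.
   Context: All graphs are finite, connected and reflexive (a loop at every vertex; moving along a loop means passing); loops are ignored for bipartiteness and distances. Cops and Attacking Robbers: the cop player places cops on vertices, then the robber chooses a vertex. In each round the cops move (each cop moves to an adjacent vertex or passes), then the robber moves (to an adjacent vertex or passes). A cop captures the robber by moving onto the robber's vertex. Additionally, if the robber moves onto a vertex occupied by a cop, exactly one cop on that vertex is removed from the game ("attacked"); the robber's initial placement on a cop's vertex does not count as an attack. A subgraph $H$ of $G$ is $(k,t)$-guardable if, in the Cops and Attacking Robbers game on $G$, $k+t$ cops can, in finitely many steps, move so that $k$ cops are placed on vertices of $H$ in such a way that from then on, if the robber ever moves into $H$, the cops immediately capture the robber (the $t$ extra cops are only needed to get the $k$ cops safely into position and are afterwards free). *)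

theory Defs
  imports Main "HOL-Library.Multiset"
begin

(* Graphs: the vertex set is the (finite) type 'v; E is the adjacency relation,
   assumed reflexive (loops) and symmetric. *)

definition reflexive_graph :: "('v \<Rightarrow> 'v \<Rightarrow> bool) \<Rightarrow> bool" where
  "reflexive_graph E \<longleftrightarrow> (\<forall>v. E v v) \<and> (\<forall>u v. E u v \<longrightarrow> E v u)"

definition connected_graph :: "('v \<Rightarrow> 'v \<Rightarrow> bool) \<Rightarrow> bool" where
  "connected_graph E \<longleftrightarrow> (\<forall>u v. E\<^sup>*\<^sup>* u v)"

definition bipartite_graph :: "('v \<Rightarrow> 'v \<Rightarrow> bool) \<Rightarrow> bool" where
  "bipartite_graph E \<longleftrightarrow> (\<exists>col :: 'v \<Rightarrow> bool. \<forall>u v. E u v \<and> u \<noteq> v \<longrightarrow> col u \<noteq> col v)"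

definition walk :: "('v \<Rightarrow> 'v \<Rightarrow> bool) \<Rightarrow> 'v list \<Rightarrow> bool" where
  "walk E xs \<longleftrightarrow> xs \<noteq> [] \<and> (\<forall>i. Suc i < length xs \<longrightarrow> E (xs ! i) (xs ! Suc i))"

definition gdist :: "('v \<Rightarrow> 'v \<Rightarrow> bool) \<Rightarrow> 'v \<Rightarrow> 'v \<Rightarrow> nat" where
  "gdist E u v = (LEAST n. \<exists>xs. walk E xs \<and> hd xs = u \<and> last xs = v \<and> length xs = Suc n)"

definition geodesic :: "('v \<Rightarrow> 'v \<Rightarrow> bool) \<Rightarrow> 'v list \<Rightarrow> bool" where
  "geodesic E P \<longleftrightarrow> walk E P \<and> distinct P \<and> length P = Suc (gdist E (hd P) (last P))"

(* Cop positions are a multiset of vertices (the active cops). *)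

(* one cop move: every cop moves to an adjacent vertex (or passes along its loop) *)
inductive cmove :: "('v \<Rightarrow> 'v \<Rightarrow> bool) \<Rightarrow> 'v multiset \<Rightarrow> 'v multiset \<Rightarrow> bool"
  for E where
  cmove_empty: "cmove E {#} {#}"
| cmove_add: "cmove E C C' \<Longrightarrow> E u v \<Longrightarrow> cmove E (add_mset u C) (add_mset v C')"

definition capt :: "('v \<Rightarrow> 'v \<Rightarrow> bool) \<Rightarrow> 'v multiset \<Rightarrow> 'v \<Rightarrow> bool" where
  "capt E C r \<longleftrightarrow> (\<exists>c \<in># C. E c r)"

(* robber moves onto r: if occupied, exactly one cop there is removed *)
definition attack :: "'v multiset \<Rightarrow> 'v \<Rightarrow> 'v multiset" where
  "attack C r = (if r \<in># C then C - {#r#} else C)"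

(* guard_pos E H C r: robber at r is to move, cops C (only these) can ensure forever that
   whenever the robber moves into H the cops capture it in their immediately following move
   (capture in any other situation ends the game, a cop win). Greatest fixed point = safety. *)
coinductive guard_pos :: "('v \<Rightarrow> 'v \<Rightarrow> bool) \<Rightarrow> 'v set \<Rightarrow> 'v multiset \<Rightarrow> 'v \<Rightarrow> bool"
  for E H where
  "(\<forall>r'. E r r' \<longrightarrow>
       capt E (attack C r') r' \<or>
       (r' \<notin> H \<and> (\<exists>C'. cmove E (attack C r') C' \<and> guard_pos E H C' r')))
   \<Longrightarrow> guard_pos E H C r"

definition guarded :: "('v \<Rightarrow> 'v \<Rightarrow> bool) \<Rightarrow> 'v set \<Rightarrow> nat \<Rightarrow> 'v multiset \<Rightarrow> 'v \<Rightarrow> bool" where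
  "guarded E H k C r \<longleftrightarrow>
     (\<exists>D. D \<subseteq># C \<and> size D = k \<and> set_mset D \<subseteq> H \<and> guard_pos E H D r)"

(* reach E H k C r: cops at C (to move), robber at r; the cops can force, in finitely many
   rounds, either a capture or a guarding configuration. Least fixed point = reachability. *)
inductive reach :: "('v \<Rightarrow> 'v \<Rightarrow> bool) \<Rightarrow> 'v set \<Rightarrow> nat \<Rightarrow> 'v multiset \<Rightarrow> 'v \<Rightarrow> bool"
  for E H k where
  reach_capt: "capt E C r \<Longrightarrow> reach E H k C r"
| reach_step: "cmove E C C' \<Longrightarrow>
     guarded E H k C' r \<or> (\<forall>r'. E r r' \<longrightarrow> reach E H k (attack C' r') r') \<Longrightarrow>
     reach E H k C r"

(* (k,t)-guardable: k+t cops are placed, then the robber chooses any vertex (no attack),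
   then play proceeds with the cops moving first. *)
definition guardable :: "('v \<Rightarrow> 'v \<Rightarrow> bool) \<Rightarrow> 'v set \<Rightarrow> nat \<Rightarrow> nat \<Rightarrow> bool" where
  "guardable E H k t \<longleftrightarrow> (\<exists>C0. size C0 = k + t \<and> (\<forall>r0. reach E H k C0 r0))"

end

theory Submission
  imports Defs
begin

(* Write P = p_0 ... p_n and d r = gdist E p_0 r. The shadow of the robber at r is p_j, where
   j = d r if d r <= n, and otherwise j is whichever of n - 1 and n has the parity of d r.
   Since d changes by at most one along an edge, the shadow moves along edges of P; since P is
   a geodesic, the shadow of a vertex of P is the vertex itself; and since the graph is
   bipartite and the shadow has the parity of d r, a robber off P is never adjacent to its
   shadow. A cop standing on the shadow therefore captures the robber as soon as it steps onto
   P, and otherwise follows the shadow without ever being adjacent to the robber, so it is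
   never attacked. To get there, two cops walk together from p_0 along P: the shadow's index
   drops by at most one per round, so they catch up, and the second cop answers an attack on
   the way. For n = 0 a single cop on p_0 guards P once the robber is not adjacent to it. *)

lemma reflexive_graphD: "reflexive_graph E \<Longrightarrow> E v v"
  unfolding reflexive_graph_def by blast

lemma reflexive_graph_sym: "reflexive_graph E \<Longrightarrow> E u v \<Longrightarrow> E v u"
  unfolding reflexive_graph_def by blast

lemma connected_graphD: "connected_graph E \<Longrightarrow> E\<^sup>*\<^sup>* u v"
  unfolding connected_graph_def by blast

lemma walk_snoc: "walk E xs \<Longrightarrow> E (last xs) v \<Longrightarrow> walk E (xs @ [v])"
  unfolding walk_def
proof (intro conjI allI impI)
  fix i
  assume xs: "xs \<noteq> [] \<and> (\<forall>i. Suc i < length xs \<longrightarrow> E (xs ! i) (xs ! Suc i))"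
    and last: "E (last xs) v" and i: "Suc i < length (xs @ [v])"
  show "E ((xs @ [v]) ! i) ((xs @ [v]) ! Suc i)"
  proof (cases "Suc i < length xs")
    case True
    then show ?thesis using xs by (simp add: nth_append)
  next
    case False
    then have "i = length xs - 1" using i by simp
    then show ?thesis using xs last False by (simp add: nth_append last_conv_nth)
  qed
qed simp

lemma walk_take: "walk E xs \<Longrightarrow> j < length xs \<Longrightarrow> walk E (take (Suc j) xs)"
  unfolding walk_def by auto

lemma rtranclp_imp_walk: "E\<^sup>*\<^sup>* u v \<Longrightarrow> \<exists>xs. walk E xs \<and> hd xs = u \<and> last xs = v"
proof (induction rule: rtranclp_induct)
  case base
  show ?case by (rule exI[of _ "[u]"]) (simp add: walk_def)
next
  case (step y z)
  then obtain xs where xs: "walk E xs" "hd xs = u" "last xs = y" by blast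
  then have "xs \<noteq> []"
    unfolding walk_def by blast
  moreover have "walk E (xs @ [z])"
    using walk_snoc[OF xs(1)] xs(3) step.hyps(2) by simp
  ultimately show ?case
    using xs(2) by (intro exI[of _ "xs @ [z]"]) simp
qed

lemma gdist_less_length: "walk E xs \<Longrightarrow> gdist E (hd xs) (last xs) < length xs"
  unfolding gdist_def walk_def
  by (rule order.strict_trans1[OF Least_le[of _ "length xs - 1"]]) auto

lemma shortest_walk_exists:
  assumes "E\<^sup>*\<^sup>* u v"
  shows "\<exists>xs. walk E xs \<and> hd xs = u \<and> last xs = v \<and> length xs = Suc (gdist E u v)"
proof -
  obtain xs where "walk E xs" "hd xs = u" "last xs = v"
    using rtranclp_imp_walk[OF assms] by blast
  then have "\<exists>n xs. walk E xs \<and> hd xs = u \<and> last xs = v \<and> length xs = Suc n"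
    by (intro exI[of _ "length xs - 1"] exI[of _ xs]) (auto simp: walk_def)
  then show ?thesis
    unfolding gdist_def by (rule LeastI_ex)
qed

lemma gdist_eq_0D: "E\<^sup>*\<^sup>* u v \<Longrightarrow> gdist E u v = 0 \<Longrightarrow> v = u"
  using shortest_walk_exists[of E u v] by (auto simp: length_Suc_conv)

lemma gdist_edge_le:
  assumes "E\<^sup>*\<^sup>* w u" and "E u v"
  shows "gdist E w v \<le> Suc (gdist E w u)"
proof -
  obtain xs where xs: "walk E xs" "hd xs = w" "last xs = u" "length xs = Suc (gdist E w u)"
    using shortest_walk_exists[OF assms(1)] by blast
  have "walk E (xs @ [v])"
    using walk_snoc[OF xs(1)] xs(3) assms(2) by simp
  moreover have "xs \<noteq> []"
    using xs(1) unfolding walk_def by blast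
  ultimately show ?thesis
    using gdist_less_length[of E "xs @ [v]"] xs by simp
qed

lemma gdist_hd_nth_le:
  assumes "walk E xs" and "j < length xs"
  shows "gdist E (hd xs) (xs ! j) \<le> j"
proof -
  have "last (take (Suc j) xs) = xs ! j"
    using assms(2) by (subst last_conv_nth) (auto simp: min_def le_Suc_eq)
  then show ?thesis
    using gdist_less_length[OF walk_take[OF assms]] assms(2) by simp
qed

lemma gdist_SucE:
  assumes "E\<^sup>*\<^sup>* w v" and "gdist E w v = Suc m"
  obtains u where "E u v" and "gdist E w u \<le> m"
proof -
  obtain xs where xs: "walk E xs" "hd xs = w" "last xs = v" "length xs = Suc (Suc m)"
    using shortest_walk_exists[OF assms(1)] assms(2) by auto
  have "gdist E w (xs ! m) \<le> m"
    using gdist_hd_nth_le[OF xs(1), of m] xs(2,4) by simp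
  moreover have "E (xs ! m) v"
    using xs unfolding walk_def by (auto simp: last_conv_nth)
  ultimately show ?thesis
    using that by blast
qed

lemma walk_nth_adjacent:
  assumes "reflexive_graph E" and "walk E xs" and "i < length xs" and "j < length xs"
    and "i \<le> Suc j" and "j \<le> Suc i"
  shows "E (xs ! i) (xs ! j)"
proof -
  consider "i = j" | "i = Suc j" | "j = Suc i"
    using assms(5,6) by linarith
  then show ?thesis
  proof cases
    case 1
    then show ?thesis using reflexive_graphD[OF assms(1)] by simp
  next
    case 2
    then show ?thesis
      using assms(2,3) reflexive_graph_sym[OF assms(1)] unfolding walk_def by blast
  next
    case 3
    then show ?thesis
      using assms(2,4) unfolding walk_def by blast
  qed
qed

lemma walk_gdist_nth_le:
  assumes "connected_graph E" and "walk E xs" and "j \<le> k" and "k < length xs"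
  shows "gdist E w (xs ! k) \<le> gdist E w (xs ! j) + (k - j)"
  using assms(3,4)
proof (induction k rule: dec_induct)
  case base
  then show ?case by simp
next
  case (step k)
  have "E (xs ! k) (xs ! Suc k)"
    using assms(2) step.prems unfolding walk_def by blast
  then have "gdist E w (xs ! Suc k) \<le> Suc (gdist E w (xs ! k))"
    by (rule gdist_edge_le[OF connected_graphD[OF assms(1)]])
  then show ?case
    using step by simp
qed

lemma gdist_parity:
  assumes conn: "connected_graph E" and col: "\<And>u v. E u v \<Longrightarrow> u \<noteq> v \<Longrightarrow> col u \<noteq> col v"
  shows "col v \<longleftrightarrow> (col w \<longleftrightarrow> even (gdist E w v))"
proof -
  note reach = connected_graphD[OF conn]
  have "col v \<longleftrightarrow> (col w \<longleftrightarrow> even m)" if "gdist E w v = m" for m v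
    using that
  proof (induction m arbitrary: v)
    case 0
    then have "v = w"
      by (rule gdist_eq_0D[OF reach])
    then show ?case by simp
  next
    case (Suc m)
    obtain u where u: "E u v" "gdist E w u \<le> m"
      by (rule gdist_SucE[OF reach Suc.prems])
    have "gdist E w u = m"
      using gdist_edge_le[OF reach[of w u] u(1)] Suc.prems u(2) by simp
    moreover have "u \<noteq> v"
      using calculation Suc.prems by auto
    ultimately show ?case
      using Suc.IH col[OF u(1)] by auto
  qed
  then show ?thesis by blast
qed

lemma adjacent_gdist_parity:
  assumes "connected_graph E" and "bipartite_graph E" and "E u v" and "u \<noteq> v"
  shows "even (gdist E w u) \<noteq> even (gdist E w v)"
proof -
  obtain col :: "_ \<Rightarrow> bool" where col: "\<And>u v. E u v \<Longrightarrow> u \<noteq> v \<Longrightarrow> col u \<noteq> col v"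
    using assms(2) unfolding bipartite_graph_def by blast
  show ?thesis
    using gdist_parity[where col = col and v = u and w = w, OF assms(1) col]
      gdist_parity[where col = col and v = v and w = w, OF assms(1) col]
      col[OF assms(3,4)] by blast
qed

lemma geodesic_gdist_nth:
  assumes "connected_graph E" and "geodesic E P" and "j < length P"
  shows "gdist E (hd P) (P ! j) = j"
proof -
  define n where "n = length P - 1"
  have P: "walk E P" "length P = Suc n" "gdist E (hd P) (last P) = n"
    using assms(2) unfolding geodesic_def n_def by auto
  then have "last P = P ! n"
    by (cases P) (auto simp: last_conv_nth)
  then have "n \<le> gdist E (hd P) (P ! j) + (n - j)"
    using walk_gdist_nth_le[OF assms(1) P(1), of j n "hd P"] assms(3) P(2,3) by simp
  with gdist_hd_nth_le[OF P(1) assms(3)] assms(3) P(2) show ?thesis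
    by linarith
qed

definition parity_clamp :: "nat \<Rightarrow> nat \<Rightarrow> nat" where
  "parity_clamp n x = (if x \<le> n then x else if even (x - n) then n else n - 1)"

lemma parity_clamp_le: "parity_clamp n x \<le> n"
  by (simp add: parity_clamp_def)

lemma parity_clamp_eq: "x \<le> n \<Longrightarrow> parity_clamp n x = x"
  by (simp add: parity_clamp_def)

lemma even_parity_clamp: "1 \<le> n \<Longrightarrow> even (parity_clamp n x) \<longleftrightarrow> even x"
  unfolding parity_clamp_def by (auto simp: even_diff_nat)

lemma parity_clamp_le_Suc: "x \<le> Suc y \<Longrightarrow> parity_clamp n x \<le> Suc (parity_clamp n y)"
  unfolding parity_clamp_def by (auto simp: even_diff_nat)

definition shadow_index :: "('v \<Rightarrow> 'v \<Rightarrow> bool) \<Rightarrow> 'v list \<Rightarrow> 'v \<Rightarrow> nat" where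
  "shadow_index E P r = parity_clamp (length P - 1) (gdist E (hd P) r)"

lemma shadow_index_less: "P \<noteq> [] \<Longrightarrow> shadow_index E P r < length P"
  unfolding shadow_index_def using parity_clamp_le[of "length P - 1"]
  by (simp add: le_diff_conv2 Suc_le_eq)

lemma shadow_index_step:
  assumes "reflexive_graph E" and "connected_graph E" and "E r r'"
  shows "shadow_index E P r \<le> Suc (shadow_index E P r')"
proof -
  have "gdist E (hd P) r \<le> Suc (gdist E (hd P) r')"
    using gdist_edge_le[OF connected_graphD[OF assms(2)] reflexive_graph_sym[OF assms(1,3)]] .
  then show ?thesis
    unfolding shadow_index_def by (rule parity_clamp_le_Suc)
qed

lemma shadow_index_nth:
  assumes "connected_graph E" and "geodesic E P" and "j < length P"
  shows "shadow_index E P (P ! j) = j"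
  using assms by (simp add: shadow_index_def geodesic_gdist_nth parity_clamp_eq)

lemma even_shadow_index:
  "2 \<le> length P \<Longrightarrow> even (shadow_index E P r) \<longleftrightarrow> even (gdist E (hd P) r)"
  unfolding shadow_index_def by (simp add: even_parity_clamp)

lemma shadow_not_adjacent:
  assumes "connected_graph E" and "bipartite_graph E" and "geodesic E P"
    and "2 \<le> length P" and "r \<notin> set P"
  shows "\<not> E (P ! shadow_index E P r) r"
proof
  let ?j = "shadow_index E P r"
  assume adj: "E (P ! ?j) r"
  have "P \<noteq> []"
    using assms(4) by auto
  then have j: "?j < length P"
    by (rule shadow_index_less)
  then have "P ! ?j \<noteq> r"
    using assms(5) nth_mem by metis
  from adjacent_gdist_parity[OF assms(1,2) adj this, of "hd P"]
  show False
    using geodesic_gdist_nth[OF assms(1,3) j] even_shadow_index[OF assms(4)] by simp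
qed

lemma guard_pos_shadow:
  assumes sym: "\<And>u v. E u v \<Longrightarrow> E v u"
    and shadow_edge: "\<And>u v. E u v \<Longrightarrow> E (f u) (f v)"
    and shadow_fixes: "\<And>v. v \<in> H \<Longrightarrow> f v = v"
    and keeps_apart: "\<And>r r'. E r r' \<Longrightarrow> \<not> E (f r) r' \<Longrightarrow> \<not> E (f r') r'"
    and "\<not> E (f r) r"
  shows "guard_pos E H {#f r#} r"
  using \<open>\<not> E (f r) r\<close>
proof (coinduction arbitrary: r)
  case guard_pos
  have "capt E (attack {#f r#} r') r' \<or>
      r' \<notin> H \<and> cmove E (attack {#f r#} r') {#f r'#} \<and> \<not> E (f r') r'"
    if move: "E r r'" for r'
  proof -
    have "f r \<noteq> r'"
      using guard_pos sym[OF move] by auto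
    then have attack: "attack {#f r#} r' = {#f r#}"
      by (simp add: attack_def)
    show ?thesis
    proof (cases "E (f r) r'")
      case True
      then show ?thesis by (simp add: attack capt_def)
    next
      case False
      have "r' \<notin> H"
        using shadow_edge[OF move] shadow_fixes False by metis
      moreover have "cmove E {#f r#} {#f r'#}"
        using shadow_edge[OF move] by (intro cmove.intros)
      ultimately show ?thesis
        using keeps_apart[OF move False] attack by simp
    qed
  qed
  then show ?case by blast
qed

lemma reach_chase_along_walk:
  assumes refl: "\<And>v. E v v" and P: "walk E P"
    and h_less: "\<And>r. h r < length P"
    and h_step: "\<And>r r'. E r r' \<Longrightarrow> h r \<le> Suc (h r')"
    and h_nth: "\<And>j. j < length P \<Longrightarrow> h (P ! j) = j"
    and guard: "\<And>r. r \<notin> set P \<Longrightarrow> guard_pos E (set P) {#P ! h r#} r"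
    and "i \<le> h r"
  shows "reach E (set P) 1 {#P ! i, P ! i#} r"
  using \<open>i \<le> h r\<close>
proof (induction "length P - i" arbitrary: i r rule: less_induct)
  case less
  show ?case
  proof (cases "h r \<le> Suc i")
    case True
    define j where "j = h r"
    have "E (P ! i) (P ! j)"
    proof -
      consider "j = i" | "j = Suc i"
        using True less.prems unfolding j_def by linarith
      then show ?thesis
        using refl P h_less[of r] unfolding walk_def j_def by cases auto
    qed
    then have move: "cmove E {#P ! i, P ! i#} {#P ! j, P ! j#}"
      by (intro cmove.intros)
    show ?thesis
    proof (cases "r \<in> set P")
      case True
      then obtain k where "k < length P" and "r = P ! k"
        by (auto simp: in_set_conv_nth)
      then have "P ! j = r"
        using h_nth unfolding j_def by simp
      then show ?thesis
        using \<open>E (P ! i) (P ! j)\<close> by (intro reach_capt) (simp add: capt_def)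
    next
      case False
      have "guarded E (set P) 1 {#P ! j, P ! j#} r"
        unfolding guarded_def using guard[OF False] h_less[of r] unfolding j_def
        by (intro exI[of _ "{#P ! h r#}"]) simp
      then show ?thesis
        by (intro reach_step[OF move]) simp
    qed
  next
    case False
    then have i: "Suc i < length P"
      using h_less[of r] by linarith
    then have move: "cmove E {#P ! i, P ! i#} {#P ! Suc i, P ! Suc i#}"
      using P unfolding walk_def by (intro cmove.intros) auto
    have "reach E (set P) 1 (attack {#P ! Suc i, P ! Suc i#} r') r'" if "E r r'" for r'
    proof (cases "r' = P ! Suc i")
      case True
      then show ?thesis
        using refl by (intro reach_capt) (simp add: attack_def capt_def)
    next
      case False
      then have "attack {#P ! Suc i, P ! Suc i#} r' = {#P ! Suc i, P ! Suc i#}"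
        by (simp add: attack_def)
      moreover have "Suc i \<le> h r'"
        using h_step[OF that] \<open>\<not> h r \<le> Suc i\<close> by linarith
      ultimately show ?thesis
        using less.hyps[of "Suc i" r'] i by simp
    qed
    then show ?thesis
      by (intro reach_step[OF move]) blast
  qed
qed

lemma guardable_singleton:
  assumes "reflexive_graph E"
  shows "guardable E {p} 1 1"
proof -
  have refl: "E p p"
    using reflexive_graphD[OF assms] .
  have "reach E {p} 1 {#p, p#} r" for r
  proof (cases "E p r")
    case True
    then show ?thesis
      by (intro reach_capt) (simp add: capt_def)
  next
    case False
    have "guard_pos E {p} {#(\<lambda>_. p) r#} r"
      by (rule guard_pos_shadow) (use reflexive_graph_sym[OF assms] refl False in auto)
    then have "guarded E {p} 1 {#p, p#} r"
      unfolding guarded_def by (intro exI[of _ "{#p#}"]) simp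
    moreover have "cmove E {#p, p#} {#p, p#}"
      using refl by (intro cmove.intros)
    ultimately show ?thesis
      by (intro reach_step) auto
  qed
  then show ?thesis
    unfolding guardable_def by (intro exI[of _ "{#p, p#}"]) auto
qed

lemma guard_pos_geodesic_shadow:
  assumes refl: "reflexive_graph E" and conn: "connected_graph E" and bip: "bipartite_graph E"
    and geo: "geodesic E P" and len: "2 \<le> length P" and "r \<notin> set P"
  shows "guard_pos E (set P) {#P ! shadow_index E P r#} r"
proof -
  let ?f = "\<lambda>v. P ! shadow_index E P v"
  have walk: "walk E P"
    using geo unfolding geodesic_def by blast
  have "P \<noteq> []"
    using len by auto
  then have less: "shadow_index E P v < length P" for v
    by (rule shadow_index_less)
  have edge: "E (?f u) (?f v)" if "E u v" for u v
    using walk_nth_adjacent[OF refl walk less less] shadow_index_step[OF refl conn that]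
      shadow_index_step[OF refl conn reflexive_graph_sym[OF refl that]] by simp
  have fixed: "?f v = v" if "v \<in> set P" for v
  proof -
    obtain j where "j < length P" and "v = P ! j"
      using \<open>v \<in> set P\<close> by (auto simp: in_set_conv_nth)
    then show ?thesis
      using shadow_index_nth[OF conn geo] by simp
  qed
  have apart: "\<not> E (?f v) v" if "v \<notin> set P" for v
    using shadow_not_adjacent[OF conn bip geo len that] .
  show ?thesis
  proof (rule guard_pos_shadow[where f = ?f])
    show "\<not> E (?f v) v" if "E u v" and "\<not> E (?f u) v" for u v
      using edge[OF that(1)] fixed apart that(2) by (cases "v \<in> set P") auto
  qed (use reflexive_graph_sym[OF refl] edge fixed apart \<open>r \<notin> set P\<close> in auto)
qed

theorem lemma4:
  fixes E :: "'v::finite \<Rightarrow> 'v \<Rightarrow> bool" and P :: "'v list"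
  assumes "reflexive_graph E" and "connected_graph E" and "bipartite_graph E"
    and "geodesic E P"
  shows "guardable E (set P) 1 1"
proof -
  have walk: "walk E P"
    using assms(4) unfolding geodesic_def by blast
  then have "P \<noteq> []"
    unfolding walk_def by blast
  then consider "length P = 1" | "2 \<le> length P"
    by (cases "length P") (auto simp: Suc_le_eq)
  then show ?thesis
  proof cases
    case 1
    then have "set P = {hd P}"
      by (cases P) auto
    then show ?thesis
      using guardable_singleton[OF assms(1)] by simp
  next
    case 2
    have "reach E (set P) 1 {#P ! 0, P ! 0#} r" for r
      using reach_chase_along_walk[where h = "shadow_index E P" and i = 0, OF reflexive_graphD[OF assms(1)]
          walk shadow_index_less[OF \<open>P \<noteq> []\<close>] shadow_index_step[OF assms(1,2)]
          shadow_index_nth[OF assms(2,4)] guard_pos_geodesic_shadow[OF assms 2]]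
      by simp
    then show ?thesis
      unfolding guardable_def by (intro exI[of _ "{#P ! 0, P ! 0#}"]) auto
  qed
qed

end
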